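(* Let $(X,G)$ be a $G$-system with metric $d$ such that $\rho=\mathrm{diam}_d(X)<1$ and the map $d:X\times X\to[0,\rho]$ is surjective. Suppose $\overline{\mathrm{mdim}}_{\mathrm M}(X,G,d)<\infty$. Then the maps $$(\mathcal A^+_d(X),\mathcal W)\to\mathbb R,\ \zeta_d\mapsto\overline{\mathrm{mdim}}_{\mathrm M}(X,G,\zeta_d)\quad\text{and}\quad(\mathcal A^+_d(X),\mathcal W)\to\mathbb R,\ \zeta_d\mapsto\underline{\mathrm{mdim}}_{\mathrm M}(X,G,\zeta_d)$$ are continuous.
   Context: $G$ is a countable discrete amenable group; a $G$-system is a compact metric space with a continuous $G$-action. $\mathcal A[0,\rho]$ is the set of continuous, increasing, subadditive $\zeta:[0,\rho]\to[0,\infty)$ with $\zeta^{-1}(0)=\{0\}$; $k_m(\zeta)=\liminf_{\varepsilon\to0^+}\frac{\log\zeta(\varepsilon)}{\log\varepsilon}$, $k_M(\zeta)=\limsup_{\varepsilon\to0^+}\frac{\log\zeta(\varepsilon)}{\log\varepsilon}$; $\mathcal A^+[0,\rho]=\{\zeta\in\mathcal A[0,\rho]:k_m(\zeta)=k_M(\zeta)>0\}$. For $\zeta\in\mathcal A^+[0,\rho]$ and $\varepsilon>0$ let $\tilde B(\zeta,\varepsilon)=\{\vartheta\in\mathcal A^+[0,\rho]:\zeta(x)(x^\varepsilon-1)<\vartheta(x)-\zeta(x)<\zeta(x)\frac{1-x^\varepsilon}{x^\varepsilon}\text{ for all }x\in(0,\rho]\}$; $\mathcal T$ is the topology on $\mathcal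 A^+[0,\rho]$ having these sets as a subbase. $\zeta_d(x,y)=\zeta(d(x,y))$, and $\mathcal A^+_d(X)=\{\zeta_d:\zeta\in\mathcal A^+[0,\rho]\}$; since $d$ is surjective onto $[0,\rho]$, $\zeta\mapsto\zeta_d$ is a bijection $\mathcal A^+[0,\rho]\to\mathcal A^+_d(X)$, and $\mathcal W$ is the topology on $\mathcal A^+_d(X)$ making this bijection a homeomorphism from $(\mathcal A^+[0,\rho],\mathcal T)$. Metric mean dimensions: for a Følner sequence $(F_n)$ and metric $\rho'$, $\rho'_F(x,y)=\max_{g\in F}\rho'(gx,gy)$, $s_F(\rho',\varepsilon,X)$ the maximal cardinality of a subset whose distinct points have $\rho'_F$-distance $>\varepsilon$; $\overline{\mathrm{mdim}}_{\mathrm M}(X,G,\rho')=\limsup_{\varepsilon\to0}\frac1{|\log\varepsilon|}\limsup_n\frac1{|F_n|}\log s_{F_n}(\rho',\varepsilon,X)$, $\underline{\mathrm{mdim}}_{\mathrm M}$ the same with $\liminf_{\varepsilon\to0}$. *)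

theory Defs
  imports "HOL-Analysis.Analysis"
begin

text \<open>A continuous (left) action of the (multiplicatively meant, additively written,
  not necessarily commutative) discrete group 'g on the compact metric space 'x.\<close>
definition continuous_action :: "('g::group_add \<Rightarrow> 'x::metric_space \<Rightarrow> 'x) \<Rightarrow> bool" where
  "continuous_action T \<longleftrightarrow> T 0 = id \<and> (\<forall>g h. T (g + h) = T g \<circ> T h)
      \<and> (\<forall>g. continuous_on UNIV (T g))"

definition folner_seq :: "(nat \<Rightarrow> 'g::group_add set) \<Rightarrow> bool" where
  "folner_seq F \<longleftrightarrow> (\<forall>n. finite (F n) \<and> F n \<noteq> {}) \<and>
     (\<forall>g. (\<lambda>n. real (card (((\<lambda>h. g + h) ` F n - F n) \<union> (F n - (\<lambda>h. g + h) ` F n)))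
                 / real (card (F n))) \<longlonglongrightarrow> 0)"

text \<open>A countable discrete group is amenable iff it admits a Folner sequence.\<close>
definition amenable_group :: "'g::group_add itself \<Rightarrow> bool" where
  "amenable_group _ \<longleftrightarrow> (\<exists>F::nat \<Rightarrow> 'g set. folner_seq F)"

definition sep_num :: "('g \<Rightarrow> 'x \<Rightarrow> 'x) \<Rightarrow> 'g set \<Rightarrow> ('x \<Rightarrow> 'x \<Rightarrow> real) \<Rightarrow> real \<Rightarrow> real" where
  "sep_num T F r eps = Sup {real (card S) | S. finite S \<and>
      (\<forall>x\<in>S. \<forall>y\<in>S. x \<noteq> y \<longrightarrow> Max ((\<lambda>g. r (T g x) (T g y)) ` F) > eps)}"

definition upper_mdim :: "(nat \<Rightarrow> 'g set) \<Rightarrow> ('g \<Rightarrow> 'x \<Rightarrow> 'x) \<Rightarrow> ('x \<Rightarrow> 'x \<Rightarrow> real) \<Rightarrow> ereal" where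
  "upper_mdim F T r = Limsup (at_right 0) (\<lambda>eps. ereal (1 / \<bar>ln eps\<bar>) *
      limsup (\<lambda>n. ereal (ln (sep_num T (F n) r eps) / real (card (F n)))))"

definition lower_mdim :: "(nat \<Rightarrow> 'g set) \<Rightarrow> ('g \<Rightarrow> 'x \<Rightarrow> 'x) \<Rightarrow> ('x \<Rightarrow> 'x \<Rightarrow> real) \<Rightarrow> ereal" where
  "lower_mdim F T r = Liminf (at_right 0) (\<lambda>eps. ereal (1 / \<bar>ln eps\<bar>) *
      limsup (\<lambda>n. ereal (ln (sep_num T (F n) r eps) / real (card (F n)))))"

text \<open>Functions on [0,rho] are represented as functions real => real that vanish outside
  [0,rho] (canonical representative).\<close>
definition classA :: "real \<Rightarrow> (real \<Rightarrow> real) set" where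
  "classA \<rho> = {\<zeta>. continuous_on {0..\<rho>} \<zeta> \<and> mono_on {0..\<rho>} \<zeta>
      \<and> (\<forall>x y. 0 \<le> x \<and> 0 \<le> y \<and> x + y \<le> \<rho> \<longrightarrow> \<zeta> (x + y) \<le> \<zeta> x + \<zeta> y)
      \<and> (\<forall>x\<in>{0..\<rho>}. \<zeta> x \<ge> 0)
      \<and> {x\<in>{0..\<rho>}. \<zeta> x = 0} = {0}
      \<and> (\<forall>x. x \<notin> {0..\<rho>} \<longrightarrow> \<zeta> x = 0)}"

definition k_m :: "(real \<Rightarrow> real) \<Rightarrow> ereal" where
  "k_m \<zeta> = Liminf (at_right 0) (\<lambda>eps. ereal (ln (\<zeta> eps) / ln eps))"

definition k_M :: "(real \<Rightarrow> real) \<Rightarrow> ereal" where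
  "k_M \<zeta> = Limsup (at_right 0) (\<lambda>eps. ereal (ln (\<zeta> eps) / ln eps))"

definition classAplus :: "real \<Rightarrow> (real \<Rightarrow> real) set" where
  "classAplus \<rho> = {\<zeta>\<in>classA \<rho>. k_m \<zeta> = k_M \<zeta> \<and> k_m \<zeta> > 0}"

definition Btilde :: "real \<Rightarrow> (real \<Rightarrow> real) \<Rightarrow> real \<Rightarrow> (real \<Rightarrow> real) set" where
  "Btilde \<rho> \<zeta> e = {\<theta>\<in>classAplus \<rho>. \<forall>x\<in>{0<..\<rho>}.
      \<zeta> x * (x powr e - 1) < \<theta> x - \<zeta> x \<and>
      \<theta> x - \<zeta> x < \<zeta> x * (1 - x powr e) / x powr e}"

definition topT :: "real \<Rightarrow> (real \<Rightarrow> real) topology" where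
  "topT \<rho> = topology_generated_by {Btilde \<rho> \<zeta> e | \<zeta> e. \<zeta> \<in> classAplus \<rho> \<and> e > 0}"

definition compose_metric :: "('x \<Rightarrow> 'x \<Rightarrow> real) \<Rightarrow> (real \<Rightarrow> real) \<Rightarrow> 'x \<Rightarrow> 'x \<Rightarrow> real" where
  "compose_metric d \<zeta> = (\<lambda>x y. \<zeta> (d x y))"

definition classAplus_d :: "real \<Rightarrow> ('x \<Rightarrow> 'x \<Rightarrow> real) \<Rightarrow> ('x \<Rightarrow> 'x \<Rightarrow> real) set" where
  "classAplus_d \<rho> d = compose_metric d ` classAplus \<rho>"

text \<open>W: the topology transported from T along the bijection zeta |-> zeta_d
  (generated by the images of the subbasic sets; since the map is injective, this is
  exactly the topology making it a homeomorphism).\<close>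
definition topW :: "real \<Rightarrow> ('x \<Rightarrow> 'x \<Rightarrow> real) \<Rightarrow> ('x \<Rightarrow> 'x \<Rightarrow> real) topology" where
  "topW \<rho> d = topology_generated_by
      {compose_metric d ` Btilde \<rho> \<zeta> e | \<zeta> e. \<zeta> \<in> classAplus \<rho> \<and> e > 0}"

end

theory Submission
  imports Defs
begin

text \<open>
  Let \<zeta> \<in> A+[0,\<rho>] have exponent k = k(\<zeta>). Since \<zeta> is increasing, a set that is
  separated for \<zeta>_d at scale \<zeta>(t) is separated for d at scale t, and a set separated for d at
  scale t is separated for \<zeta>_d at scale \<zeta>(t)/2. So the separation rate of \<zeta>_d, read along the
  reparametrisations e = \<zeta>(t) and e = \<zeta>(t)/2 of the scale, squeezes that of d; as
  ln \<zeta>(t) / ln t \<rightarrow> k, normalising by |ln e| instead of |ln t| costs exactly the factor k, so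
  both metric mean dimensions of \<zeta>_d are those of d divided by k. Continuity then reduces to
  continuity of \<zeta> \<mapsto> k(\<zeta>): a member \<vartheta> of B(\<zeta>,\<epsilon>) satisfies \<zeta>(x) x^\<epsilon> < \<vartheta>(x) < \<zeta>(x) x^-\<epsilon>,
  which forces |k(\<vartheta>) - k(\<zeta>)| \<le> \<epsilon>.
\<close>

section \<open>Limits under reparametrisation of the scale\<close>

text \<open>Unlike the library's Limsup_filtermap_eq, these need no injectivity of f.\<close>

lemma Limsup_filtermap: "Limsup (filtermap f F) g = Limsup F (\<lambda>x. g (f x))"
proof (rule antisym[OF _ Limsup_filtermap_ge])
  show "Limsup (filtermap f F) g \<le> Limsup F (\<lambda>x. g (f x))"
    unfolding Limsup_def[of F]
  proof (rule INF_greatest)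
    fix P assume "P \<in> {P. eventually P F}"
    then have "eventually (\<lambda>y. y \<in> f ` Collect P) (filtermap f F)"
      by (auto simp: eventually_filtermap elim: eventually_mono)
    then show "Limsup (filtermap f F) g \<le> Sup ((\<lambda>x. g (f x)) ` Collect P)"
      by (intro Limsup_bounded) (auto elim!: eventually_mono intro: SUP_upper)
  qed
qed

lemma Liminf_filtermap: "Liminf (filtermap f F) g = Liminf F (\<lambda>x. g (f x))"
proof (rule antisym[OF Liminf_filtermap_le])
  show "Liminf F (\<lambda>x. g (f x)) \<le> Liminf (filtermap f F) g"
    unfolding Liminf_def[of F]
  proof (rule SUP_least)
    fix P assume "P \<in> {P. eventually P F}"
    then have "eventually (\<lambda>y. y \<in> f ` Collect P) (filtermap f F)"
      by (auto simp: eventually_filtermap elim: eventually_mono)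
    then show "Inf ((\<lambda>x. g (f x)) ` Collect P) \<le> Liminf (filtermap f F) g"
      by (intro Liminf_bounded) (auto elim!: eventually_mono intro: INF_lower)
  qed
qed

lemma ereal_mult_squeeze:
  fixes X L :: ereal
  assumes k: "0 < k"
    and lower: "\<And>c. 0 < c \<Longrightarrow> c < k \<Longrightarrow> X * ereal c \<le> L"
    and upper: "\<And>c. k < c \<Longrightarrow> L \<le> X * ereal c"
  shows "L = X * ereal k"
proof -
  have lim: "((\<lambda>c. X * ereal c) \<longlongrightarrow> X * ereal k) (at k)"
    using k by (intro tendsto_mult_ereal tendsto_const) (auto intro: tendsto_ident_at)
  have "L \<le> X * ereal k"
  proof (rule tendsto_lowerbound[OF tendsto_mono[OF at_le[OF subset_UNIV] lim]])
    show "eventually (\<lambda>c. L \<le> X * ereal c) (at_right k)"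
      unfolding eventually_at_right_field using upper by (intro exI[of _ "k + 1"]) auto
  qed simp
  moreover have "X * ereal k \<le> L"
  proof (rule tendsto_upperbound[OF tendsto_mono[OF at_le[OF subset_UNIV] lim]])
    show "eventually (\<lambda>c. X * ereal c \<le> L) (at_left k)"
      unfolding eventually_at_left_field using k lower by (intro exI[of _ 0]) auto
  qed simp
  ultimately show ?thesis by (rule antisym)
qed

lemma Limsup_mult_tendsto:
  fixes u :: "'a \<Rightarrow> ereal" and r :: "'a \<Rightarrow> real"
  assumes F: "F \<noteq> bot" and u: "eventually (\<lambda>x. 0 \<le> u x) F"
    and r: "(r \<longlongrightarrow> k) F" and k: "0 < k"
  shows "Limsup F (\<lambda>x. u x * ereal (r x)) = Limsup F u * ereal k"
proof (rule ereal_mult_squeeze[OF k])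
  fix c assume c: "0 < c" "c < k"
  have "eventually (\<lambda>x. u x * ereal c \<le> u x * ereal (r x)) F"
    using eventually_conj[OF u order_tendstoD(1)[OF r \<open>c < k\<close>]]
    by (rule eventually_mono) (auto intro: ereal_mult_left_mono)
  then show "Limsup F u * ereal c \<le> Limsup F (\<lambda>x. u x * ereal (r x))"
    using Limsup_mono Limsup_ereal_mult_right[OF F, of c u] c by fastforce
next
  fix c assume c: "k < c"
  have "eventually (\<lambda>x. u x * ereal (r x) \<le> u x * ereal c) F"
    using eventually_conj[OF u order_tendstoD(2)[OF r c]]
    by (rule eventually_mono) (auto intro: ereal_mult_left_mono)
  then show "Limsup F (\<lambda>x. u x * ereal (r x)) \<le> Limsup F u * ereal c"
    using Limsup_mono Limsup_ereal_mult_right[OF F, of c u] c k by fastforce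
qed

lemma Liminf_mult_tendsto:
  fixes u :: "'a \<Rightarrow> ereal" and r :: "'a \<Rightarrow> real"
  assumes F: "F \<noteq> bot" and u: "eventually (\<lambda>x. 0 \<le> u x) F"
    and r: "(r \<longlongrightarrow> k) F" and k: "0 < k"
  shows "Liminf F (\<lambda>x. u x * ereal (r x)) = Liminf F u * ereal k"
proof (rule ereal_mult_squeeze[OF k])
  fix c assume c: "0 < c" "c < k"
  have "eventually (\<lambda>x. u x * ereal c \<le> u x * ereal (r x)) F"
    using eventually_conj[OF u order_tendstoD(1)[OF r \<open>c < k\<close>]]
    by (rule eventually_mono) (auto intro: ereal_mult_left_mono)
  then show "Liminf F u * ereal c \<le> Liminf F (\<lambda>x. u x * ereal (r x))"
    using Liminf_mono Liminf_ereal_mult_right[OF F, of c u] c by fastforce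
next
  fix c assume c: "k < c"
  have "eventually (\<lambda>x. u x * ereal (r x) \<le> u x * ereal c) F"
    using eventually_conj[OF u order_tendstoD(2)[OF r c]]
    by (rule eventually_mono) (auto intro: ereal_mult_left_mono)
  then show "Liminf F (\<lambda>x. u x * ereal (r x)) \<le> Liminf F u * ereal c"
    using Liminf_mono Liminf_ereal_mult_right[OF F, of c u] c k by fastforce
qed

lemma filtermap_at_right_0_eq:
  fixes f :: "real \<Rightarrow> real"
  assumes \<rho>: "0 < \<rho>" and cont: "continuous_on {0..\<rho>} f" and f0: "f 0 = 0"
    and pos: "\<And>t. 0 < t \<Longrightarrow> t \<le> \<rho> \<Longrightarrow> 0 < f t"
  shows "filtermap f (at_right 0) = at_right 0"
proof (rule antisym)
  have "(f \<longlongrightarrow> 0) (at_right 0)"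
    using cont \<rho> f0 at_within_Icc_at_right[OF \<rho>] unfolding continuous_on_def by force
  moreover have "eventually (\<lambda>t. 0 < f t) (at_right 0)"
    unfolding eventually_at_right_field using \<rho> pos by (intro exI[of _ \<rho>]) auto
  ultimately have "filterlim f (at_right 0) (at_right 0)"
    unfolding filterlim_at by (auto elim: eventually_mono)
  then show "filtermap f (at_right 0) \<le> at_right 0"
    by (simp add: filterlim_def)
next
  show "at_right 0 \<le> filtermap f (at_right 0)"
  proof (rule filter_leI)
    fix P assume "eventually P (filtermap f (at_right 0))"
    then obtain \<delta> where \<delta>: "0 < \<delta>" "\<And>t. 0 < t \<Longrightarrow> t < \<delta> \<Longrightarrow> P (f t)"
      unfolding eventually_filtermap eventually_at_right_field by auto
    define s where "s = min \<delta> \<rho> / 2"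
    have s: "0 < s" "s < \<delta>" "s \<le> \<rho>" using \<delta> \<rho> by (auto simp: s_def)
    have "P e" if e: "0 < e" "e < f s" for e
    proof -
      obtain t where t: "0 \<le> t" "t \<le> s" "f t = e"
        using IVT'[of f 0 e s] e s f0 continuous_on_subset[OF cont, of "{0..s}"] by auto
      then have "0 < t" using e f0 by (cases "t = 0") auto
      then show "P e" using \<delta>(2)[of t] t s by auto
    qed
    then show "eventually P (at_right 0)"
      unfolding eventually_at_right_field using pos[OF s(1,3)] by blast
  qed
qed

lemma log_rate_reparam_eventually:
  fixes B :: "real \<Rightarrow> ereal" and \<phi> :: "real \<Rightarrow> real"
  assumes "filtermap \<phi> (at_right 0) = at_right 0"
  shows "eventually (\<lambda>t. ereal (1 / \<bar>ln (\<phi> t)\<bar>) * B t * ereal (ln (\<phi> t) / ln t)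
                         = ereal (1 / \<bar>ln t\<bar>) * B t) (at_right 0)"
proof -
  have "eventually (\<lambda>e. 0 < e \<and> e < 1) (filtermap \<phi> (at_right 0))"
    unfolding assms eventually_at_right_field by (intro exI[of _ 1]) auto
  then have "eventually (\<lambda>t. 0 < \<phi> t \<and> \<phi> t < 1 \<and> 0 < t \<and> t < 1) (at_right 0)"
    unfolding eventually_filtermap
    by (intro eventually_conj) (auto simp: eventually_at_right_field intro: exI[of _ 1])
  then show ?thesis
  proof (rule eventually_mono)
    fix t assume t: "0 < \<phi> t \<and> \<phi> t < 1 \<and> 0 < t \<and> t < 1"
    then have "1 / \<bar>ln (\<phi> t)\<bar> * (ln (\<phi> t) / ln t) = 1 / \<bar>ln t\<bar>"
      by (simp add: field_simps)
    then show "ereal (1 / \<bar>ln (\<phi> t)\<bar>) * B t * ereal (ln (\<phi> t) / ln t) = ereal (1 / \<bar>ln t\<bar>) * B t"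
      by (metis mult.commute mult.assoc times_ereal.simps(1))
  qed
qed

lemma Limsup_log_rate_reparam:
  fixes b :: "real \<Rightarrow> ereal" and \<phi> :: "real \<Rightarrow> real"
  assumes \<phi>: "filtermap \<phi> (at_right 0) = at_right 0"
    and ratio: "((\<lambda>t. ln (\<phi> t) / ln t) \<longlongrightarrow> k) (at_right 0)" and k: "0 < k"
    and b: "eventually (\<lambda>t. 0 \<le> b (\<phi> t)) (at_right 0)"
  shows "Limsup (at_right 0) (\<lambda>t. ereal (1 / \<bar>ln t\<bar>) * b (\<phi> t))
       = Limsup (at_right 0) (\<lambda>e. ereal (1 / \<bar>ln e\<bar>) * b e) * ereal k"
proof -
  have nonneg: "eventually (\<lambda>t. 0 \<le> ereal (1 / \<bar>ln (\<phi> t)\<bar>) * b (\<phi> t)) (at_right 0)"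
    using b by (rule eventually_mono) simp
  have "Limsup (at_right 0) (\<lambda>e. ereal (1 / \<bar>ln e\<bar>) * b e) * ereal k
      = Limsup (at_right 0) (\<lambda>t. ereal (1 / \<bar>ln (\<phi> t)\<bar>) * b (\<phi> t)) * ereal k"
    by (subst (1) \<phi>[symmetric]) (simp add: Limsup_filtermap)
  also have "\<dots> = Limsup (at_right 0)
      (\<lambda>t. ereal (1 / \<bar>ln (\<phi> t)\<bar>) * b (\<phi> t) * ereal (ln (\<phi> t) / ln t))"
    by (rule Limsup_mult_tendsto[symmetric, OF _ nonneg ratio k]) simp
  also have "\<dots> = Limsup (at_right 0) (\<lambda>t. ereal (1 / \<bar>ln t\<bar>) * b (\<phi> t))"
    by (rule Limsup_eq[OF log_rate_reparam_eventually[OF \<phi>]])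
  finally show ?thesis ..
qed

lemma Liminf_log_rate_reparam:
  fixes b :: "real \<Rightarrow> ereal" and \<phi> :: "real \<Rightarrow> real"
  assumes \<phi>: "filtermap \<phi> (at_right 0) = at_right 0"
    and ratio: "((\<lambda>t. ln (\<phi> t) / ln t) \<longlongrightarrow> k) (at_right 0)" and k: "0 < k"
    and b: "eventually (\<lambda>t. 0 \<le> b (\<phi> t)) (at_right 0)"
  shows "Liminf (at_right 0) (\<lambda>t. ereal (1 / \<bar>ln t\<bar>) * b (\<phi> t))
       = Liminf (at_right 0) (\<lambda>e. ereal (1 / \<bar>ln e\<bar>) * b e) * ereal k"
proof -
  have nonneg: "eventually (\<lambda>t. 0 \<le> ereal (1 / \<bar>ln (\<phi> t)\<bar>) * b (\<phi> t)) (at_right 0)"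
    using b by (rule eventually_mono) simp
  have "Liminf (at_right 0) (\<lambda>e. ereal (1 / \<bar>ln e\<bar>) * b e) * ereal k
      = Liminf (at_right 0) (\<lambda>t. ereal (1 / \<bar>ln (\<phi> t)\<bar>) * b (\<phi> t)) * ereal k"
    by (subst (1) \<phi>[symmetric]) (simp add: Liminf_filtermap)
  also have "\<dots> = Liminf (at_right 0)
      (\<lambda>t. ereal (1 / \<bar>ln (\<phi> t)\<bar>) * b (\<phi> t) * ereal (ln (\<phi> t) / ln t))"
    by (rule Liminf_mult_tendsto[symmetric, OF _ nonneg ratio k]) simp
  also have "\<dots> = Liminf (at_right 0) (\<lambda>t. ereal (1 / \<bar>ln t\<bar>) * b (\<phi> t))"
    by (rule Liminf_eq[OF log_rate_reparam_eventually[OF \<phi>]])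
  finally show ?thesis ..
qed

lemma log_rate_scaling:
  fixes a b :: "real \<Rightarrow> ereal" and \<phi> \<psi> :: "real \<Rightarrow> real"
  assumes \<phi>: "filtermap \<phi> (at_right 0) = at_right 0"
    and \<psi>: "filtermap \<psi> (at_right 0) = at_right 0"
    and ratio_\<phi>: "((\<lambda>t. ln (\<phi> t) / ln t) \<longlongrightarrow> k) (at_right 0)"
    and ratio_\<psi>: "((\<lambda>t. ln (\<psi> t) / ln t) \<longlongrightarrow> k) (at_right 0)"
    and k: "0 < k"
    and bounds: "eventually (\<lambda>t. 0 \<le> b (\<phi> t) \<and> b (\<phi> t) \<le> a t \<and> a t \<le> b (\<psi> t)) (at_right 0)"
  shows "Limsup (at_right 0) (\<lambda>t. ereal (1 / \<bar>ln t\<bar>) * a t)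
       = Limsup (at_right 0) (\<lambda>e. ereal (1 / \<bar>ln e\<bar>) * b e) * ereal k"
    and "Liminf (at_right 0) (\<lambda>t. ereal (1 / \<bar>ln t\<bar>) * a t)
       = Liminf (at_right 0) (\<lambda>e. ereal (1 / \<bar>ln e\<bar>) * b e) * ereal k"
proof -
  have nonneg: "eventually (\<lambda>t. 0 \<le> b (\<phi> t)) (at_right 0)"
    "eventually (\<lambda>t. 0 \<le> b (\<psi> t)) (at_right 0)"
    using bounds by (auto elim: eventually_mono)
  have lo: "eventually (\<lambda>t. ereal (1 / \<bar>ln t\<bar>) * b (\<phi> t) \<le> ereal (1 / \<bar>ln t\<bar>) * a t) (at_right 0)"
    and hi: "eventually (\<lambda>t. ereal (1 / \<bar>ln t\<bar>) * a t \<le> ereal (1 / \<bar>ln t\<bar>) * b (\<psi> t)) (at_right 0)"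
    using bounds by (auto elim!: eventually_mono intro: ereal_mult_left_mono)
  note Limsup_\<phi> = Limsup_log_rate_reparam[OF \<phi> ratio_\<phi> k nonneg(1)]
    and Limsup_\<psi> = Limsup_log_rate_reparam[OF \<psi> ratio_\<psi> k nonneg(2)]
    and Liminf_\<phi> = Liminf_log_rate_reparam[OF \<phi> ratio_\<phi> k nonneg(1)]
    and Liminf_\<psi> = Liminf_log_rate_reparam[OF \<psi> ratio_\<psi> k nonneg(2)]
  show "Limsup (at_right 0) (\<lambda>t. ereal (1 / \<bar>ln t\<bar>) * a t)
      = Limsup (at_right 0) (\<lambda>e. ereal (1 / \<bar>ln e\<bar>) * b e) * ereal k"
    using Limsup_mono[OF lo] Limsup_mono[OF hi] unfolding Limsup_\<phi> Limsup_\<psi> by (rule antisym[rotated])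
  show "Liminf (at_right 0) (\<lambda>t. ereal (1 / \<bar>ln t\<bar>) * a t)
      = Liminf (at_right 0) (\<lambda>e. ereal (1 / \<bar>ln e\<bar>) * b e) * ereal k"
    using Liminf_mono[OF lo] Liminf_mono[OF hi] unfolding Liminf_\<phi> Liminf_\<psi> by (rule antisym[rotated])
qed

section \<open>The classes A and A+\<close>

lemma classAD:
  assumes "\<zeta> \<in> classA \<rho>"
  shows "continuous_on {0..\<rho>} \<zeta>" "mono_on {0..\<rho>} \<zeta>" "\<zeta> 0 = 0"
    "\<And>x. 0 < x \<Longrightarrow> x \<le> \<rho> \<Longrightarrow> 0 < \<zeta> x"
    "\<And>x y. 0 \<le> x \<Longrightarrow> 0 \<le> y \<Longrightarrow> x + y \<le> \<rho> \<Longrightarrow> \<zeta> (x + y) \<le> \<zeta> x + \<zeta> y"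
    "\<And>x. x \<notin> {0..\<rho>} \<Longrightarrow> \<zeta> x = 0"
proof -
  have zeros: "{x\<in>{0..\<rho>}. \<zeta> x = 0} = {0}" and nonneg: "\<forall>x\<in>{0..\<rho>}. 0 \<le> \<zeta> x"
    using assms by (auto simp: classA_def)
  show "\<zeta> 0 = 0" using zeros by auto
  show "0 < \<zeta> x" if "0 < x" "x \<le> \<rho>" for x
    using zeros nonneg that by (metis (mono_tags) atLeastAtMost_iff less_eq_real_def
        less_irrefl mem_Collect_eq singletonD)
  show "continuous_on {0..\<rho>} \<zeta>" "mono_on {0..\<rho>} \<zeta>"
    "\<And>x y. 0 \<le> x \<Longrightarrow> 0 \<le> y \<Longrightarrow> x + y \<le> \<rho> \<Longrightarrow> \<zeta> (x + y) \<le> \<zeta> x + \<zeta> y"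
    "\<And>x. x \<notin> {0..\<rho>} \<Longrightarrow> \<zeta> x = 0"
    using assms by (auto simp: classA_def)
qed

lemma classA_of_nat_mult_le:
  assumes "\<zeta> \<in> classA \<rho>" "0 \<le> x" "real n * x \<le> \<rho>"
  shows "\<zeta> (real n * x) \<le> real n * \<zeta> x"
  using assms(3)
proof (induction n)
  case 0
  then show ?case using classAD(3)[OF assms(1)] by simp
next
  case (Suc n)
  have "\<zeta> (real (Suc n) * x) \<le> \<zeta> (real n * x) + \<zeta> x"
    using classAD(5)[OF assms(1), of "real n * x" x] Suc.prems assms(2) by (simp add: algebra_simps)
  also have "\<dots> \<le> real n * \<zeta> x + \<zeta> x"
    using Suc assms(2) by (simp add: algebra_simps)
  finally show ?case by (simp add: algebra_simps)
qed

lemma classA_linear_lower_bound: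
  assumes \<zeta>: "\<zeta> \<in> classA \<rho>" and \<rho>: "0 < \<rho>"
  obtains c where "0 < c" "\<And>t. 0 < t \<Longrightarrow> t \<le> \<rho> / 2 \<Longrightarrow> c * t \<le> \<zeta> t"
proof
  show "0 < \<zeta> (\<rho> / 2) / \<rho>" using classAD(4)[OF \<zeta>, of "\<rho> / 2"] \<rho> by simp
  fix t assume t: "0 < t" "t \<le> \<rho> / 2"
  define n where "n = nat \<lfloor>\<rho> / t\<rfloor>"
  have n: "real n \<le> \<rho> / t" "\<rho> / t < real n + 1"
    using t \<rho> by (auto simp: n_def)
  have nt: "real n * t \<le> \<rho>" "\<rho> / 2 \<le> real n * t"
    using n t by (auto simp: field_simps)
  have "\<zeta> (\<rho> / 2) \<le> \<zeta> (real n * t)"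
    using nt t \<rho> by (intro mono_onD[OF classAD(2)[OF \<zeta>]]) auto
  also have "\<dots> \<le> real n * \<zeta> t"
    using classA_of_nat_mult_le[OF \<zeta> _ nt(1)] t by simp
  also have "\<dots> \<le> \<rho> / t * \<zeta> t"
    using n classAD(4)[OF \<zeta>, of t] t by (intro mult_right_mono) auto
  finally show "\<zeta> (\<rho> / 2) / \<rho> * t \<le> \<zeta> t"
    using t \<rho> by (simp add: field_simps)
qed

lemma classAplus_exponent:
  assumes "\<zeta> \<in> classAplus \<rho>"
  shows "0 < \<rho>" and "k_m \<zeta> = ereal (real_of_ereal (k_m \<zeta>))" and "0 < real_of_ereal (k_m \<zeta>)"
    and "((\<lambda>t. ln (\<zeta> t) / ln t) \<longlongrightarrow> real_of_ereal (k_m \<zeta>)) (at_right 0)"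
proof -
  have \<zeta>: "\<zeta> \<in> classA \<rho>" and eq: "k_m \<zeta> = k_M \<zeta>" and pos: "0 < k_m \<zeta>"
    using assms by (auto simp: classAplus_def)
  have "eventually (\<lambda>t. 0 < ln (\<zeta> t) / ln t) (at_right 0)"
    using less_LiminfD[OF pos[unfolded k_m_def]] by simp
  then obtain t where "0 < t" "0 < ln (\<zeta> t) / ln t"
    unfolding eventually_at_right_field by (metis field_lbound_gt_zero less_numeral_extra(1))
  then have "\<zeta> t \<noteq> 0" and "0 < t" by auto
  then have "t \<in> {0..\<rho>}" using classAD(6)[OF \<zeta>] by blast
  then show \<rho>: "0 < \<rho>" using \<open>0 < t\<close> by simp
  obtain c where c: "0 < c" "\<And>t. 0 < t \<Longrightarrow> t \<le> \<rho> / 2 \<Longrightarrow> c * t \<le> \<zeta> t"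
    using classA_linear_lower_bound[OF \<zeta> \<rho>] by blast
  have "eventually (\<lambda>t. ereal (ln (\<zeta> t) / ln t) \<le> 2) (at_right 0)"
    unfolding eventually_at_right_field
  proof (intro exI[of _ "min (min c (\<rho> / 2)) 1"] conjI allI impI)
    show "0 < min (min c (\<rho> / 2)) 1" using c \<rho> by auto
    fix t :: real assume t: "0 < t" "t < min (min c (\<rho> / 2)) 1"
    have "ln t < ln c" and "ln (c * t) = ln c + ln t" using t c(1) by (simp_all add: ln_mult)
    then have "2 * ln t \<le> ln (c * t)" by linarith
    also have "\<dots> \<le> ln (\<zeta> t)"
      by (rule ln_mono[OF c(2)]) (use t c(1) in simp_all)
    finally have "2 * ln t \<le> ln (\<zeta> t)" .
    moreover have "ln t < 0" using t by simp
    ultimately show "ereal (ln (\<zeta> t) / ln t) \<le> 2" by (simp add: neg_divide_le_eq mult.commute)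
  qed
  then have "k_m \<zeta> \<le> 2" unfolding eq k_M_def by (rule Limsup_bounded)
  then have "\<bar>k_m \<zeta>\<bar> \<noteq> \<infinity>" using pos by (cases "k_m \<zeta>") auto
  then show k: "k_m \<zeta> = ereal (real_of_ereal (k_m \<zeta>))" by (simp add: ereal_real')
  then show "0 < real_of_ereal (k_m \<zeta>)" using pos by (metis ereal_less(2))
  have "((\<lambda>t. ereal (ln (\<zeta> t) / ln t)) \<longlongrightarrow> k_m \<zeta>) (at_right 0)"
    using eq unfolding tendsto_iff_Liminf_eq_Limsup[OF trivial_limit_at_right_real] k_m_def k_M_def
    by simp
  then show "((\<lambda>t. ln (\<zeta> t) / ln t) \<longlongrightarrow> real_of_ereal (k_m \<zeta>)) (at_right 0)"
    by (metis k lim_ereal)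
qed

section \<open>Separated sets and separation rates\<close>

definition separated_sets :: "('g \<Rightarrow> 'x \<Rightarrow> 'x) \<Rightarrow> 'g set \<Rightarrow> ('x \<Rightarrow> 'x \<Rightarrow> real) \<Rightarrow> real \<Rightarrow> 'x set set"
  where "separated_sets T F r eps = {S. finite S \<and>
      (\<forall>x\<in>S. \<forall>y\<in>S. x \<noteq> y \<longrightarrow> Max ((\<lambda>g. r (T g x) (T g y)) ` F) > eps)}"

lemma sep_num_eq_Sup_card: "sep_num T F r eps = Sup ((\<lambda>S. real (card S)) ` separated_sets T F r eps)"
  unfolding sep_num_def separated_sets_def by (simp only: setcompr_eq_image mem_Collect_eq)

lemma mem_separated_sets_iff:
  assumes "finite F" "F \<noteq> {}"
  shows "S \<in> separated_sets T F r eps \<longleftrightarrow> finite S \<and>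
      (\<forall>x\<in>S. \<forall>y\<in>S. x \<noteq> y \<longrightarrow> (\<exists>g\<in>F. eps < r (T g x) (T g y)))"
  using assms by (simp add: separated_sets_def Max_gr_iff)

lemma separated_sets_mono:
  assumes "finite F" "F \<noteq> {}" "\<And>a b. e1 < r1 a b \<Longrightarrow> e2 < r2 a b"
  shows "separated_sets T F r1 e1 \<subseteq> separated_sets T F r2 e2"
  using assms(3) unfolding subset_iff mem_separated_sets_iff[OF assms(1,2)] by blast

lemma bdd_above_card_separated_sets:
  fixes T :: "'g \<Rightarrow> 'x::metric_space \<Rightarrow> 'x"
  assumes cpt: "compact (UNIV :: 'x set)" and cont: "\<And>g. continuous_on UNIV (T g)"
    and F: "finite F" "F \<noteq> {}" and eps: "0 < eps"
  shows "bdd_above ((\<lambda>S. real (card S)) ` separated_sets T F dist eps)"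
proof -
  define U where "U c = (\<Inter>g\<in>F. T g -` ball (T g c) (eps / 2))" for c
  have "open (U c)" for c
    unfolding U_def using F(1) cont by (intro open_INT ballI open_vimage) auto
  moreover have "UNIV \<subseteq> (\<Union>c. U c)"
    using eps by (auto simp: U_def intro!: UN_I)
  ultimately obtain C where C: "finite C" "UNIV \<subseteq> (\<Union>c\<in>C. U c)"
    using compactE_image[OF cpt] by metis
  define center where "center s = (SOME c. c \<in> C \<and> s \<in> U c)" for s
  have center: "center s \<in> C" "s \<in> U (center s)" for s
    using someI_ex[of "\<lambda>c. c \<in> C \<and> s \<in> U c"] C(2) unfolding center_def by blast+
  have "card S \<le> card C" if S: "S \<in> separated_sets T F dist eps" for S
  proof (rule card_inj_on_le[OF _ _ C(1)])
    show "inj_on center S"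
    proof (rule inj_onI, rule ccontr)
      fix x y assume xy: "x \<in> S" "y \<in> S" "center x = center y" "x \<noteq> y"
      then obtain g where g: "g \<in> F" "eps < dist (T g x) (T g y)"
        using S F by (auto simp: mem_separated_sets_iff)
      have "dist (T g (center x)) (T g x) < eps / 2" "dist (T g (center x)) (T g y) < eps / 2"
        using center(2)[of x] center(2)[of y] g(1) xy(3) by (auto simp: U_def)
      then show False
        using g(2) dist_triangle3[of "T g x" "T g y" "T g (center x)"] by linarith
    qed
  qed (use center(1) in auto)
  then show ?thesis by (intro bdd_aboveI[of _ "real (card C)"]) auto
qed

lemma sep_num_mono:
  assumes bdd: "bdd_above ((\<lambda>S. real (card S)) ` separated_sets T F r2 e2)"
    and sub: "separated_sets T F r1 e1 \<subseteq> separated_sets T F r2 e2"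
  shows "1 \<le> sep_num T F r1 e1" and "sep_num T F r1 e1 \<le> sep_num T F r2 e2"
proof -
  have sing: "{x} \<in> separated_sets T F r1 e1" for x by (simp add: separated_sets_def)
  let ?C = "\<lambda>r e. (\<lambda>S. real (card S)) ` separated_sets T F r e"
  have sub': "?C r1 e1 \<subseteq> ?C r2 e2" using sub by (rule image_mono)
  have "1 \<in> ?C r1 e1" using sing[of undefined] by force
  then show "1 \<le> sep_num T F r1 e1"
    unfolding sep_num_eq_Sup_card by (rule cSup_upper[OF _ bdd_above_mono[OF bdd sub']])
  show "sep_num T F r1 e1 \<le> sep_num T F r2 e2"
    unfolding sep_num_eq_Sup_card using \<open>1 \<in> ?C r1 e1\<close> by (intro cSup_subset_mono[OF _ bdd sub']) auto
qed

definition sep_rate :: "(nat \<Rightarrow> 'g set) \<Rightarrow> ('g \<Rightarrow> 'x \<Rightarrow> 'x) \<Rightarrow> ('x \<Rightarrow> 'x \<Rightarrow> real) \<Rightarrow> real \<Rightarrow> ereal"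
  where "sep_rate F T r eps = limsup (\<lambda>n. ereal (ln (sep_num T (F n) r eps) / real (card (F n))))"

lemma upper_mdim_eq_Limsup_sep_rate:
  "upper_mdim F T r = Limsup (at_right 0) (\<lambda>e. ereal (1 / \<bar>ln e\<bar>) * sep_rate F T r e)"
  by (simp add: upper_mdim_def sep_rate_def)

lemma lower_mdim_eq_Liminf_sep_rate:
  "lower_mdim F T r = Liminf (at_right 0) (\<lambda>e. ereal (1 / \<bar>ln e\<bar>) * sep_rate F T r e)"
  by (simp add: lower_mdim_def sep_rate_def)

lemma sep_rate_mono:
  assumes F: "\<And>n. finite (F n) \<and> F n \<noteq> {}"
    and bdd: "\<And>n. bdd_above ((\<lambda>S. real (card S)) ` separated_sets T (F n) r2 e2)"
    and sub: "\<And>n. separated_sets T (F n) r1 e1 \<subseteq> separated_sets T (F n) r2 e2"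
  shows "0 \<le> sep_rate F T r1 e1" and "sep_rate F T r1 e1 \<le> sep_rate F T r2 e2"
proof -
  note sep = sep_num_mono[OF bdd sub]
  have card: "0 < real (card (F n))" for n using F[of n] by (simp add: card_gt_0_iff)
  have "0 \<le> ln (sep_num T (F n) r1 e1) / real (card (F n))" for n
    using sep(1)[of n] card[of n] by simp
  then have "limsup (\<lambda>n. 0) \<le> sep_rate F T r1 e1"
    unfolding sep_rate_def by (intro Limsup_mono) auto
  then show "0 \<le> sep_rate F T r1 e1" by (simp add: Limsup_const)
  have "ln (sep_num T (F n) r1 e1) / real (card (F n)) \<le> ln (sep_num T (F n) r2 e2) / real (card (F n))" for n
    using sep[of n] card[of n] by (intro divide_right_mono) auto
  then show "sep_rate F T r1 e1 \<le> sep_rate F T r2 e2"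
    unfolding sep_rate_def by (intro Limsup_mono) auto
qed

section \<open>Metric mean dimension of \<zeta>_d\<close>

lemma separated_sets_compose_metric:
  fixes d :: "'x \<Rightarrow> 'x \<Rightarrow> real"
  assumes \<zeta>: "\<zeta> \<in> classA \<rho>" and F: "finite F" "F \<noteq> {}"
    and d: "\<And>a b. 0 \<le> d a b \<and> d a b \<le> \<rho>"
  shows "\<lbrakk>0 < s; s \<le> \<rho>; \<zeta> s \<le> e\<rbrakk> \<Longrightarrow>
      separated_sets T F (compose_metric d \<zeta>) e \<subseteq> separated_sets T F d s"
    and "\<lbrakk>0 \<le> s; e < \<zeta> s\<rbrakk> \<Longrightarrow>
      separated_sets T F d s \<subseteq> separated_sets T F (compose_metric d \<zeta>) e"
proof -
  have mono: "\<zeta> s \<le> \<zeta> s'" if "0 \<le> s" "s \<le> s'" "s' \<le> \<rho>" for s s'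
    using that by (intro mono_onD[OF classAD(2)[OF \<zeta>]]) auto
  show "separated_sets T F (compose_metric d \<zeta>) e \<subseteq> separated_sets T F d s"
    if "0 < s" "s \<le> \<rho>" "\<zeta> s \<le> e"
  proof (rule separated_sets_mono[OF F])
    fix a b assume "e < compose_metric d \<zeta> a b"
    then show "s < d a b"
      using that mono[of "d a b" s] d[of a b] unfolding compose_metric_def by force
  qed
  txt \<open>\<zeta> is only weakly increasing, so d-separation at scale s merely gives \<zeta>_d-separation
    at the scales below \<zeta>(s).\<close>
  show "separated_sets T F d s \<subseteq> separated_sets T F (compose_metric d \<zeta>) e"
    if "0 \<le> s" "e < \<zeta> s"
  proof (rule separated_sets_mono[OF F])
    fix a b assume "s < d a b"
    then show "e < compose_metric d \<zeta> a b"
      using that mono[of s "d a b"] d[of a b] unfolding compose_metric_def by force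
  qed
qed

lemma sep_rate_compose_metric:
  fixes T :: "'g \<Rightarrow> 'x::metric_space \<Rightarrow> 'x" and F :: "nat \<Rightarrow> 'g set"
  assumes cpt: "compact (UNIV :: 'x set)" and cont: "\<And>g. continuous_on UNIV (T g)"
    and F: "\<And>n. finite (F n) \<and> F n \<noteq> {}"
    and \<zeta>: "\<zeta> \<in> classA (diameter (UNIV :: 'x set))" and \<rho>: "0 < diameter (UNIV :: 'x set)"
  shows "0 < e \<Longrightarrow> 0 \<le> sep_rate F T (compose_metric dist \<zeta>) e"
    and "\<lbrakk>0 < t; t \<le> diameter (UNIV :: 'x set)\<rbrakk> \<Longrightarrow>
      sep_rate F T (compose_metric dist \<zeta>) (\<zeta> t) \<le> sep_rate F T dist t"
    and "\<lbrakk>0 < t; t \<le> diameter (UNIV :: 'x set)\<rbrakk> \<Longrightarrow>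
      sep_rate F T dist t \<le> sep_rate F T (compose_metric dist \<zeta>) (\<zeta> t / 2)"
proof -
  define \<rho> where "\<rho> = diameter (UNIV :: 'x set)"
  have "dist a b \<le> \<rho>" for a b :: 'x
    unfolding \<rho>_def by (rule diameter_bounded_bound[OF compact_imp_bounded[OF cpt]]) simp_all
  note sets = separated_sets_compose_metric[OF \<zeta>[folded \<rho>_def] conjunct1[OF F] conjunct2[OF F],
      of dist, OF conjI[OF zero_le_dist this]]
  have dist_bdd: "bdd_above ((\<lambda>S. real (card S)) ` separated_sets T (F n) dist s)" if "0 < s" for n s
    using F[of n] that by (intro bdd_above_card_separated_sets[OF cpt cont]) auto
  have compose_bdd: "bdd_above ((\<lambda>S. real (card S)) ` separated_sets T (F n) (compose_metric dist \<zeta>) e)"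
    if "0 < e" for n e
  proof -
    have "eventually (\<lambda>s. s < e) (filtermap \<zeta> (at_right 0))"
      using classAD[OF \<zeta>] \<rho> that
      by (subst filtermap_at_right_0_eq) (auto simp: eventually_at_right_field)
    then have "eventually (\<lambda>s. \<zeta> s < e \<and> 0 < s \<and> s \<le> \<rho>) (at_right 0)"
      using \<rho> unfolding eventually_filtermap \<rho>_def
      by (intro eventually_conj) (auto simp: eventually_at_right_field intro: exI[of _ \<rho>])
    then obtain s where "\<zeta> s < e" "0 < s" "s \<le> \<rho>"
      using eventually_happens'[OF trivial_limit_at_right_real] by blast
    then show ?thesis
      using bdd_above_mono[OF dist_bdd[of s n] image_mono[OF sets(1)[where s=s and e=e]]] by simp
  qed
  show "0 < e \<Longrightarrow> 0 \<le> sep_rate F T (compose_metric dist \<zeta>) e"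
    using sep_rate_mono[OF F compose_bdd order_refl] by simp
  assume t: "0 < t" "t \<le> diameter (UNIV :: 'x set)"
  then have "0 < \<zeta> t" using classAD(4)[OF \<zeta>] by simp
  then show "sep_rate F T (compose_metric dist \<zeta>) (\<zeta> t) \<le> sep_rate F T dist t"
    and "sep_rate F T dist t \<le> sep_rate F T (compose_metric dist \<zeta>) (\<zeta> t / 2)"
    using sep_rate_mono(2)[OF F dist_bdd sets(1)[where s=t and e="\<zeta> t"]]
      sep_rate_mono(2)[OF F compose_bdd sets(2)[where s=t and e="\<zeta> t / 2"]] t by (auto simp: \<rho>_def)
qed

lemma mdim_compose_metric:
  fixes T :: "'g \<Rightarrow> 'x::metric_space \<Rightarrow> 'x" and F :: "nat \<Rightarrow> 'g set"
  assumes cpt: "compact (UNIV :: 'x set)" and cont: "\<And>g. continuous_on UNIV (T g)"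
    and F: "\<And>n. finite (F n) \<and> F n \<noteq> {}"
    and \<zeta>: "\<zeta> \<in> classAplus (diameter (UNIV :: 'x set))"
  defines "k \<equiv> real_of_ereal (k_m \<zeta>)"
  shows "upper_mdim F T dist = upper_mdim F T (compose_metric dist \<zeta>) * ereal k"
    and "lower_mdim F T dist = lower_mdim F T (compose_metric dist \<zeta>) * ereal k"
    and "0 \<le> lower_mdim F T (compose_metric dist \<zeta>)"
proof -
  define \<rho> where "\<rho> = diameter (UNIV :: 'x set)"
  have \<zeta>A: "\<zeta> \<in> classA \<rho>" using \<zeta> by (simp add: classAplus_def \<rho>_def)
  note exponent = classAplus_exponent[OF \<zeta>, folded \<rho>_def k_def]
  note rates = sep_rate_compose_metric[OF cpt cont F \<zeta>A[unfolded \<rho>_def] exponent(1)[unfolded \<rho>_def],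
      folded \<rho>_def]
  have \<zeta>_filtermap: "filtermap \<zeta> (at_right 0) = at_right 0"
    and half_filtermap: "filtermap (\<lambda>t. \<zeta> t / 2) (at_right 0) = at_right 0"
    using exponent(1) classAD[OF \<zeta>A]
    by (auto intro!: filtermap_at_right_0_eq continuous_on_divide continuous_on_const)
  have scale: "eventually (\<lambda>t. 0 < t \<and> t \<le> \<rho>) (at_right 0)"
    using exponent(1) by (auto simp: eventually_at_right_field intro: exI[of _ \<rho>])
  have "((\<lambda>t. ln (\<zeta> t) / ln t - ln 2 / ln t) \<longlongrightarrow> k - 0) (at_right 0)"
    using exponent(4)
    by (intro tendsto_diff tendsto_divide_0[OF tendsto_const]
        filterlim_at_bot_imp_at_infinity[OF ln_at_0])
  moreover have "eventually (\<lambda>t. ln (\<zeta> t) / ln t - ln 2 / ln t = ln (\<zeta> t / 2) / ln t) (at_right 0)"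
    using scale
  proof (rule eventually_mono)
    fix t assume "0 < t \<and> t \<le> \<rho>"
    then have "0 < \<zeta> t" using classAD(4)[OF \<zeta>A] by simp
    then show "ln (\<zeta> t) / ln t - ln 2 / ln t = ln (\<zeta> t / 2) / ln t"
      by (simp add: ln_div diff_divide_distrib)
  qed
  ultimately have ratio_half: "((\<lambda>t. ln (\<zeta> t / 2) / ln t) \<longlongrightarrow> k) (at_right 0)"
    by (simp add: tendsto_cong)
  have "eventually (\<lambda>t. 0 \<le> sep_rate F T (compose_metric dist \<zeta>) (\<zeta> t)
      \<and> sep_rate F T (compose_metric dist \<zeta>) (\<zeta> t) \<le> sep_rate F T dist t
      \<and> sep_rate F T dist t \<le> sep_rate F T (compose_metric dist \<zeta>) (\<zeta> t / 2)) (at_right 0)"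
    using scale by (rule eventually_mono) (use rates classAD(4)[OF \<zeta>A] in auto)
  note scaling = log_rate_scaling[OF \<zeta>_filtermap half_filtermap exponent(4) ratio_half exponent(3) this]
  show "upper_mdim F T dist = upper_mdim F T (compose_metric dist \<zeta>) * ereal k"
    unfolding upper_mdim_eq_Limsup_sep_rate by (rule scaling(1))
  show "lower_mdim F T dist = lower_mdim F T (compose_metric dist \<zeta>) * ereal k"
    unfolding lower_mdim_eq_Liminf_sep_rate by (rule scaling(2))
  have "eventually (\<lambda>e. 0 \<le> ereal (1 / \<bar>ln e\<bar>) * sep_rate F T (compose_metric dist \<zeta>) e) (at_right 0)"
    using eventually_at_right_less[of 0] by (rule eventually_mono) (simp add: rates(1))
  then show "0 \<le> lower_mdim F T (compose_metric dist \<zeta>)"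
    unfolding lower_mdim_eq_Liminf_sep_rate by (rule Liminf_bounded)
qed

lemma mdim_compose_metric_finite:
  fixes T :: "'g \<Rightarrow> 'x::metric_space \<Rightarrow> 'x" and F :: "nat \<Rightarrow> 'g set"
  assumes cpt: "compact (UNIV :: 'x set)" and cont: "\<And>g. continuous_on UNIV (T g)"
    and F: "\<And>n. finite (F n) \<and> F n \<noteq> {}"
    and \<zeta>: "\<zeta> \<in> classAplus (diameter (UNIV :: 'x set))"
    and fin: "upper_mdim F T dist < \<infinity>"
  defines "k \<equiv> real_of_ereal (k_m \<zeta>)"
  shows "upper_mdim F T (compose_metric dist \<zeta>) = ereal (real_of_ereal (upper_mdim F T dist) / k)"
    and "lower_mdim F T (compose_metric dist \<zeta>) = ereal (real_of_ereal (lower_mdim F T dist) / k)"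
proof -
  note scaling = mdim_compose_metric[OF cpt cont F \<zeta>, folded k_def]
  have k: "0 < k" using classAplus_exponent(3)[OF \<zeta>] by (simp add: k_def)
  let ?U = "upper_mdim F T (compose_metric dist \<zeta>)" and ?L = "lower_mdim F T (compose_metric dist \<zeta>)"
  have "?L \<le> ?U"
    unfolding upper_mdim_def lower_mdim_def by (rule Liminf_le_Limsup) simp
  moreover have "?U < \<infinity>"
    using fin k unfolding scaling(1) by (cases ?U) (auto split: if_splits)
  ultimately obtain u l where "?U = ereal u" "?L = ereal l"
    using scaling(3) by (cases ?U; cases ?L) auto
  then show "?U = ereal (real_of_ereal (upper_mdim F T dist) / k)"
    and "?L = ereal (real_of_ereal (lower_mdim F T dist) / k)"
    using k unfolding scaling(1,2) by simp_all
qed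

section \<open>Continuity for the topology W\<close>

lemma mem_Btilde_iff:
  "\<theta> \<in> Btilde \<rho> \<zeta> e \<longleftrightarrow>
     \<theta> \<in> classAplus \<rho> \<and> (\<forall>x\<in>{0<..\<rho>}. \<zeta> x * x powr e < \<theta> x \<and> \<theta> x < \<zeta> x / x powr e)"
proof -
  have "\<zeta> x * (x powr e - 1) < \<theta> x - \<zeta> x \<longleftrightarrow> \<zeta> x * x powr e < \<theta> x"
    "\<theta> x - \<zeta> x < \<zeta> x * (1 - x powr e) / x powr e \<longleftrightarrow> \<theta> x < \<zeta> x / x powr e"
    if "0 < x" for x
    using that by (simp_all add: algebra_simps diff_divide_distrib)
  then show ?thesis unfolding Btilde_def by auto
qed

lemma self_mem_Btilde:
  assumes \<zeta>: "\<zeta> \<in> classAplus \<rho>" and "\<rho> < 1" "0 < e"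
  shows "\<zeta> \<in> Btilde \<rho> \<zeta> e"
  unfolding mem_Btilde_iff
proof (rule conjI[OF \<zeta>], intro ballI)
  fix x assume x: "x \<in> {0<..\<rho>}"
  then have "0 < \<zeta> x" using classAD(4) \<zeta> by (auto simp: classAplus_def)
  moreover have "0 < x powr e" "x powr e < 1"
    using x assms powr_less_mono2[of e x 1] by auto
  ultimately show "\<zeta> x * x powr e < \<zeta> x \<and> \<zeta> x < \<zeta> x / x powr e"
    by (simp add: mult_less_cancel_left1 less_divide_eq)
qed

lemma k_m_Btilde_dist:
  assumes \<zeta>: "\<zeta> \<in> classAplus \<rho>" and \<zeta>': "\<zeta>' \<in> Btilde \<rho> \<zeta> e"
  shows "\<bar>real_of_ereal (k_m \<zeta>') - real_of_ereal (k_m \<zeta>)\<bar> \<le> e"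
proof -
  have \<zeta>'A: "\<zeta>' \<in> classAplus \<rho>"
    and bounds: "\<And>x. 0 < x \<Longrightarrow> x \<le> \<rho> \<Longrightarrow> \<zeta> x * x powr e < \<zeta>' x \<and> \<zeta>' x < \<zeta> x / x powr e"
    using \<zeta>' by (auto simp: mem_Btilde_iff)
  have lim: "((\<lambda>t. \<bar>ln (\<zeta>' t) / ln t - ln (\<zeta> t) / ln t\<bar>)
      \<longlongrightarrow> \<bar>real_of_ereal (k_m \<zeta>') - real_of_ereal (k_m \<zeta>)\<bar>) (at_right 0)"
    by (intro tendsto_rabs tendsto_diff classAplus_exponent(4)[OF \<zeta>] classAplus_exponent(4)[OF \<zeta>'A])
  have "eventually (\<lambda>t. \<bar>ln (\<zeta>' t) / ln t - ln (\<zeta> t) / ln t\<bar> \<le> e) (at_right 0)"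
    unfolding eventually_at_right_field
  proof (intro exI[of _ "min \<rho> 1"] conjI allI impI)
    show "0 < min \<rho> 1" using classAplus_exponent(1)[OF \<zeta>] by simp
    fix t :: real assume t: "0 < t" "t < min \<rho> 1"
    have pos: "0 < \<zeta> t" "0 < t powr e"
      using classAD(4)[of \<zeta> \<rho> t] \<zeta> t by (auto simp: classAplus_def)
    have lo: "\<zeta> t * t powr e < \<zeta>' t" and hi: "\<zeta>' t < \<zeta> t / t powr e"
      using bounds[of t] t by auto
    have "0 < \<zeta> t * t powr e" "0 < \<zeta> t / t powr e" using pos by simp_all
    then have "ln (\<zeta> t * t powr e) < ln (\<zeta>' t)" "ln (\<zeta>' t) < ln (\<zeta> t / t powr e)"
      using lo hi by (auto intro!: ln_less_cancel_iff[THEN iffD2])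
    then have "\<bar>ln (\<zeta>' t) - ln (\<zeta> t)\<bar> \<le> e * - ln t"
      using pos t by (simp add: ln_mult ln_div ln_powr abs_le_iff)
    moreover have lt: "ln t < 0" using t by simp
    ultimately have "\<bar>ln (\<zeta>' t) - ln (\<zeta> t)\<bar> / - ln t \<le> e"
      by (subst pos_divide_le_eq) simp_all
    then show "\<bar>ln (\<zeta>' t) / ln t - ln (\<zeta> t) / ln t\<bar> \<le> e"
      by (metis abs_divide diff_divide_distrib abs_of_neg[OF lt])
  qed
  then show ?thesis by (rule tendsto_upperbound[OF lim _ trivial_limit_at_right_real])
qed

lemma continuous_map_topW_divide_exponent:
  fixes f :: "('x \<Rightarrow> 'x \<Rightarrow> real) \<Rightarrow> real"
  assumes \<rho>: "\<rho> < 1"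
    and f: "\<And>\<zeta>. \<zeta> \<in> classAplus \<rho> \<Longrightarrow> f (compose_metric d \<zeta>) = c / real_of_ereal (k_m \<zeta>)"
  shows "continuous_map (topW \<rho> d) euclideanreal f"
  unfolding Met_TC.continuous_map_to_metric[simplified]
proof (intro ballI allI impI)
  fix \<theta> and \<epsilon> :: real assume \<theta>: "\<theta> \<in> topspace (topW \<rho> d)" and \<epsilon>: "0 < \<epsilon>"
  obtain \<zeta> where \<zeta>: "\<zeta> \<in> classAplus \<rho>" and \<theta>_eq: "\<theta> = compose_metric d \<zeta>"
    using \<theta> by (auto simp: topW_def mem_Btilde_iff)
  define k where "k = real_of_ereal (k_m \<zeta>)"
  have "continuous (at k) (\<lambda>x. c / x)"
    using classAplus_exponent(3)[OF \<zeta>] by (intro continuous_intros) (simp add: k_def)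
  then obtain \<delta> where \<delta>: "0 < \<delta>" "\<And>x. dist x k < \<delta> \<Longrightarrow> dist (c / x) (c / k) < \<epsilon>"
    using \<epsilon> unfolding continuous_at_eps_delta by blast
  show "\<exists>U. openin (topW \<rho> d) U \<and> \<theta> \<in> U \<and> (\<forall>y\<in>U. dist (f \<theta>) (f y) < \<epsilon>)"
  proof (intro exI[of _ "compose_metric d ` Btilde \<rho> \<zeta> (\<delta> / 2)"] conjI ballI)
    let ?U = "compose_metric d ` Btilde \<rho> \<zeta> (\<delta> / 2)"
    show "openin (topW \<rho> d) ?U"
      unfolding topW_def openin_topology_generated_by_iff
      using \<zeta> \<delta>(1) by (intro generate_topology_on.Basis) (auto intro!: exI[of _ "\<delta> / 2"])
    show "\<theta> \<in> ?U" using self_mem_Btilde[OF \<zeta> \<rho>] \<delta>(1) \<theta>_eq by simp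
    fix y assume "y \<in> ?U"
    then obtain \<zeta>' where \<zeta>': "\<zeta>' \<in> Btilde \<rho> \<zeta> (\<delta> / 2)" and y: "y = compose_metric d \<zeta>'" by blast
    have "\<zeta>' \<in> classAplus \<rho>" using \<zeta>' by (simp add: mem_Btilde_iff)
    moreover have "dist (real_of_ereal (k_m \<zeta>')) k < \<delta>"
      using k_m_Btilde_dist[OF \<zeta> \<zeta>'] \<delta>(1) by (simp add: dist_real_def k_def)
    ultimately show "dist (f \<theta>) (f y) < \<epsilon>"
      using \<delta>(2) f \<zeta> unfolding y \<theta>_eq k_def by (simp add: dist_commute)
  qed
qed

theorem mainTheorem16:
  fixes T :: "'g::{group_add, countable} \<Rightarrow> 'x::metric_space \<Rightarrow> 'x"
    and F :: "nat \<Rightarrow> 'g set"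
  assumes "continuous_action T"
    and "compact (UNIV :: 'x set)"
    and "folner_seq F"
    and "diameter (UNIV :: 'x set) < 1"
    and "(\<lambda>(x::'x, y::'x). dist x y) ` (UNIV \<times> UNIV) = {0..diameter (UNIV :: 'x set)}"
    and "upper_mdim F T dist < \<infinity>"
  shows "(\<forall>\<theta>\<in>classAplus_d (diameter (UNIV :: 'x set)) dist.
            \<bar>upper_mdim F T \<theta>\<bar> \<noteq> \<infinity> \<and> \<bar>lower_mdim F T \<theta>\<bar> \<noteq> \<infinity>)
       \<and> continuous_map (topW (diameter (UNIV :: 'x set)) dist) euclideanreal
            (\<lambda>\<theta>. real_of_ereal (upper_mdim F T \<theta>))
       \<and> continuous_map (topW (diameter (UNIV :: 'x set)) dist) euclideanreal
            (\<lambda>\<theta>. real_of_ereal (lower_mdim F T \<theta>))"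
proof -
  have cont: "\<And>g. continuous_on UNIV (T g)"
    using assms(1) unfolding continuous_action_def by blast
  have F: "\<And>n. finite (F n) \<and> F n \<noteq> {}"
    using assms(3) unfolding folner_seq_def by blast
  note formula = mdim_compose_metric_finite[OF assms(2) cont F _ assms(6)]
  show ?thesis
  proof (intro conjI ballI)
    fix \<theta> :: "'x \<Rightarrow> 'x \<Rightarrow> real" assume "\<theta> \<in> classAplus_d (diameter (UNIV :: 'x set)) dist"
    then obtain \<zeta> where "\<zeta> \<in> classAplus (diameter (UNIV :: 'x set))" "\<theta> = compose_metric dist \<zeta>"
      unfolding classAplus_d_def by blast
    then show "\<bar>upper_mdim F T \<theta>\<bar> \<noteq> \<infinity>" "\<bar>lower_mdim F T \<theta>\<bar> \<noteq> \<infinity>"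
      using formula by simp_all
  qed (use formula in \<open>auto intro!: continuous_map_topW_divide_exponent[OF assms(4)]\<close>)
qed

end
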